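(* Let $D\subset\mathbb{R}^d$ ($d\ge 3$) be a bounded regular domain and let $f:\partial D\to\overline{\mathbb{R}}$. Suppose $h_1,h_2$ are harmonic functions on $D$ and $k_1,k_2:D\to\mathbb{R}_+$ are real-valued non-negative superharmonic functions on $D$ such that $h_1$ converges to $f$ controlled by $k_1$ and $h_2$ converges to $f$ controlled by $k_2$. Then $h_1=h_2$ on $D$. In particular, if $u$ is a harmonic function on $D$ which converges to $0$ controlled by a real-valued non-negative superharmonic function $k$ on $D$, then $u=0$ on $D$.
   Context: Controlled convergence: for $f:\partial D\to\overline{\mathbb{R}}$ and $h,k:D\to\mathbb{R}$ with $k\ge 0$, one says $h$ converges to $f$ controlled by $k$ if for every $A\subset D$ and every $y\in\partial D\cap\overline{A}$: (1) if $\limsup_{A\ni x\to y}k(x)<\infty$ then $f(y)\in\mathbb{R}$ and $f(y)=\lim_{A\ni x\to y}h(x)$; (2) if $\lim_{A\ni x\to y}k(x)=\infty$ then $\lim_{A\ni x\to y}\frac{h(x)}{1+k(x)}=0$. *)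

theory Defs
  imports "HOL-Analysis.Analysis"
begin

text \<open>Harmonic functions: C^2 functions on an open set with vanishing Laplacian.
  g is the gradient, H x is the derivative of the gradient at x (the Hessian as a linear map);
  the Laplacian at x is the trace of H x.\<close>
definition harmonic_on :: "('a::euclidean_space) set \<Rightarrow> ('a \<Rightarrow> real) \<Rightarrow> bool" where
  "harmonic_on D h \<longleftrightarrow> open D \<and>
     (\<exists>g H. (\<forall>x\<in>D. (h has_derivative (\<lambda>v. g x \<bullet> v)) (at x)
                    \<and> (g has_derivative H x) (at x)
                    \<and> (\<Sum>b\<in>Basis. H x b \<bullet> b) = 0)
          \<and> (\<forall>v. continuous_on D (\<lambda>x. H x v)))"

definition lsc_on :: "('a::topological_space) set \<Rightarrow> ('a \<Rightarrow> real) \<Rightarrow> bool" where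
  "lsc_on D u \<longleftrightarrow> (\<forall>x\<in>D. \<forall>t. t < u x \<longrightarrow> eventually (\<lambda>y. t < u y) (at x within D))"

definition superharmonic_on :: "('a::euclidean_space) set \<Rightarrow> ('a \<Rightarrow> real) \<Rightarrow> bool" where
  "superharmonic_on D u \<longleftrightarrow> open D \<and> lsc_on D u \<and>
     (\<forall>c r v. 0 < r \<and> cball c r \<subseteq> D \<and> continuous_on (cball c r) v \<and> harmonic_on (ball c r) v
        \<and> (\<forall>y\<in>sphere c r. v y \<le> u y) \<longrightarrow> (\<forall>y\<in>ball c r. v y \<le> u y))"

definition regular_domain :: "('a::euclidean_space) set \<Rightarrow> bool" where
  "regular_domain D \<longleftrightarrow> open D \<and> connected D \<and> D \<noteq> {} \<and> bounded D \<and>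
     (\<forall>\<phi>. continuous_on (frontier D) \<phi> \<longrightarrow>
        (\<exists>h. harmonic_on D h \<and> (\<forall>y\<in>frontier D. (h \<longlongrightarrow> \<phi> y) (at y within D))))"

definition controlled_conv ::
  "('a::euclidean_space) set \<Rightarrow> ('a \<Rightarrow> ereal) \<Rightarrow> ('a \<Rightarrow> real) \<Rightarrow> ('a \<Rightarrow> real) \<Rightarrow> bool" where
  "controlled_conv D f h k \<longleftrightarrow>
     (\<forall>A y. A \<subseteq> D \<and> y \<in> frontier D \<and> y \<in> closure A \<longrightarrow>
        ((Limsup (at y within A) (\<lambda>x. ereal (k x)) < \<infinity> \<longrightarrow>
            f y \<noteq> \<infinity> \<and> f y \<noteq> -\<infinity> \<and> (h \<longlongrightarrow> real_of_ereal (f y)) (at y within A))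
       \<and> (filterlim k at_top (at y within A) \<longrightarrow>
            ((\<lambda>x. h x / (1 + k x)) \<longlongrightarrow> 0) (at y within A))))"

end

(*
  Fix e > 0. Along any set approaching a boundary point y, either k1 stays bounded, and then
  h1 tends to f y, or k1 tends to infinity, and then h1 = o(1 + k1); in both cases
  h1 - e k1 < f y + e near y, and symmetrically h2 + e k2 > f y - e. A partition of unity on
  the compact boundary glues the values f y into a continuous function phi squeezed between
  these bounds, and regularity of D provides a harmonic H with boundary values phi. Then
  e k1 - (h1 - H) and e k2 - (H - h2) are superharmonic and exceed -2e near the boundary, so by
  the minimum principle they exceed -2e on D. Hence h1 - h2 <= e (k1 + k2 + 4), and letting
  e -> 0 and exchanging the roles gives h1 = h2. The minimum principle holds because
  u - eta |x|^2 cannot attain a minimum in D: near such a point it would lie above an affine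
  function on a sphere but not at the centre. The second claim is the case h2 = 0, k2 = k.
*)

theory Submission
  imports Defs
begin

lemma eventually_at_within_if_notin_closure:
  assumes "y \<notin> closure {x\<in>A. \<not> P x}"
  shows "eventually P (at y within A)"
proof -
  let ?U = "- closure {x\<in>A. \<not> P x}"
  have "P x" if "x \<in> A" "x \<in> ?U" for x
  proof (rule ccontr)
    assume "\<not> P x"
    then have "x \<in> closure {x\<in>A. \<not> P x}"
      using that(1) by (intro closure_subset[THEN subsetD]) simp
    with that(2) show False
      by simp
  qed
  moreover have "open ?U" "y \<in> ?U"
    using assms by auto
  ultimately show ?thesis
    unfolding eventually_at_topological by blast
qed

lemma ex_if_eventually_at_within_closure:
  assumes "y \<in> closure A" "y \<notin> A" "eventually P (at y within A)"
  shows "\<exists>x\<in>A. P x"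
proof -
  have "eventually (\<lambda>x. x \<in> A) (at y within A)"
    by (simp add: eventually_at_filter)
  then have "eventually (\<lambda>x. x \<in> A \<and> P x) (at y within A)"
    using assms(3) by (rule eventually_conj)
  moreover have "at y within A \<noteq> bot"
    using assms(1,2) by (simp add: at_within_eq_bot_iff)
  ultimately show ?thesis
    using eventually_happens' by blast
qed

lemma filterlim_at_top_or_closure_sublevel:
  fixes k :: "'a::topological_space \<Rightarrow> real"
  shows "filterlim k at_top (at y within A) \<or> (\<exists>n::nat. y \<in> closure {x\<in>A. k x \<le> real n})"
proof (rule disjCI)
  assume "\<not> (\<exists>n::nat. y \<in> closure {x\<in>A. k x \<le> real n})"
  then have above: "eventually (\<lambda>x. real n < k x) (at y within A)" for n :: nat
    by (intro eventually_at_within_if_notin_closure) (simp add: not_less)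
  have "eventually (\<lambda>x. Z \<le> k x) (at y within A)" for Z
    using above[of "nat \<lceil>Z\<rceil>"] by eventually_elim (use real_nat_ceiling_ge[of Z] in linarith)
  then show "filterlim k at_top (at y within A)"
    by (simp add: filterlim_at_top)
qed

lemma harmonic_on_imp_open: "harmonic_on D u \<Longrightarrow> open D"
  by (simp add: harmonic_on_def)

lemma harmonic_on_imp_continuous_on: "harmonic_on D u \<Longrightarrow> continuous_on D u"
  unfolding harmonic_on_def
  by (metis continuous_at_imp_continuous_on has_derivative_continuous)

lemma harmonic_on_subset:
  assumes "harmonic_on D u" "open S" "S \<subseteq> D"
  shows "harmonic_on S u"
proof -
  obtain g H where "\<forall>x\<in>D. (u has_derivative (\<lambda>y. g x \<bullet> y)) (at x)
      \<and> (g has_derivative H x) (at x) \<and> (\<Sum>i\<in>Basis. H x i \<bullet> i) = 0"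
    and "\<forall>y. continuous_on D (\<lambda>x. H x y)"
    using assms(1) unfolding harmonic_on_def by blast
  then show ?thesis
    using assms(2,3) continuous_on_subset unfolding harmonic_on_def by blast
qed

lemma harmonic_on_affine:
  fixes c :: "'a::euclidean_space"
  assumes "open D"
  shows "harmonic_on D (\<lambda>x. c \<bullet> x + d)"
  unfolding harmonic_on_def
proof (intro conjI exI[of _ "\<lambda>_. c"] exI[of _ "\<lambda>_ _. 0"] ballI allI)
  fix x
  show "((\<lambda>x. c \<bullet> x + d) has_derivative (\<bullet>) c) (at x)"
    by (auto intro!: derivative_eq_intros)
qed (use assms in auto)

lemma harmonic_on_lincomb:
  assumes "harmonic_on D u" "harmonic_on D v"
  shows "harmonic_on D (\<lambda>x. a * u x + b * v x)"
proof -
  obtain gu Hu where u: "\<forall>x\<in>D. (u has_derivative (\<lambda>y. gu x \<bullet> y)) (at x)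
      \<and> (gu has_derivative Hu x) (at x) \<and> (\<Sum>i\<in>Basis. Hu x i \<bullet> i) = 0"
    and Hu: "\<forall>y. continuous_on D (\<lambda>x. Hu x y)"
    using assms(1) unfolding harmonic_on_def by blast
  obtain gv Hv where v: "\<forall>x\<in>D. (v has_derivative (\<lambda>y. gv x \<bullet> y)) (at x)
      \<and> (gv has_derivative Hv x) (at x) \<and> (\<Sum>i\<in>Basis. Hv x i \<bullet> i) = 0"
    and Hv: "\<forall>y. continuous_on D (\<lambda>x. Hv x y)"
    using assms(2) unfolding harmonic_on_def by blast
  define g where "g x = a *\<^sub>R gu x + b *\<^sub>R gv x" for x
  define H where "H x y = a *\<^sub>R Hu x y + b *\<^sub>R Hv x y" for x y
  have "((\<lambda>x. a * u x + b * v x) has_derivative (\<lambda>y. g x \<bullet> y)) (at x)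
      \<and> (g has_derivative H x) (at x) \<and> (\<Sum>i\<in>Basis. H x i \<bullet> i) = 0" if "x \<in> D" for x
  proof (intro conjI)
    have "((\<lambda>x. a * u x + b * v x) has_derivative (\<lambda>y. a * (gu x \<bullet> y) + b * (gv x \<bullet> y))) (at x)"
      using u v that by (intro has_derivative_add has_derivative_mult_right) auto
    then show "((\<lambda>x. a * u x + b * v x) has_derivative (\<lambda>y. g x \<bullet> y)) (at x)"
      by (simp add: g_def inner_add_left)
    show "(g has_derivative H x) (at x)"
      using u v that unfolding g_def H_def by (intro has_derivative_add has_derivative_scaleR_right) auto
    show "(\<Sum>i\<in>Basis. H x i \<bullet> i) = 0"
      using u v that by (simp add: H_def inner_add_left sum.distrib flip: sum_distrib_left)
  qed
  moreover have "continuous_on D (\<lambda>x. H x y)" for y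
    using Hu Hv unfolding H_def by (intro continuous_on_add continuous_on_scaleR continuous_on_const) auto
  ultimately show ?thesis
    unfolding harmonic_on_def using harmonic_on_imp_open[OF assms(1)]
    by (intro conjI exI[of _ g] exI[of _ H]) blast+
qed

lemma harmonic_on_diff:
  "harmonic_on D u \<Longrightarrow> harmonic_on D v \<Longrightarrow> harmonic_on D (\<lambda>x. u x - v x)"
  using harmonic_on_lincomb[of D u v 1 "-1"] by simp

lemma lsc_on_subset: "lsc_on D u \<Longrightarrow> S \<subseteq> D \<Longrightarrow> lsc_on S u"
  unfolding lsc_on_def by (meson filter_leD at_le subsetD)

lemma lsc_on_diff_continuous:
  fixes u g :: "'a::topological_space \<Rightarrow> real"
  assumes "lsc_on D u" "continuous_on D g"
  shows "lsc_on D (\<lambda>x. u x - g x)"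
  unfolding lsc_on_def
proof (intro ballI allI impI)
  fix x t assume x: "x \<in> D" and t: "t < u x - g x"
  define \<delta> where "\<delta> = (u x - g x - t) / 2"
  have t_eq: "t = u x - g x - 2 * \<delta>"
    by (simp add: \<delta>_def field_simps)
  have "eventually (\<lambda>y. u x - \<delta> < u y) (at x within D)"
    using assms(1) x t unfolding lsc_on_def \<delta>_def by simp
  moreover have "eventually (\<lambda>y. g y < g x + \<delta>) (at x within D)"
    using assms(2) x t unfolding continuous_on_def \<delta>_def by (intro order_tendstoD(2)) auto
  ultimately show "eventually (\<lambda>y. t < u y - g y) (at x within D)"
    by eventually_elim (use t_eq in linarith)
qed

lemma lsc_on_sublevel_closed:
  assumes "lsc_on D u" "z \<in> D" "z \<in> closure {x\<in>D. u x \<le> a}"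
  shows "u z \<le> a"
proof (rule ccontr)
  assume "\<not> u z \<le> a"
  then have "eventually (\<lambda>x. a < u x) (at z within D)"
    using assms(1,2) unfolding lsc_on_def by auto
  then obtain U where U: "open U" "z \<in> U" "\<forall>x\<in>U. x \<in> D \<longrightarrow> x \<noteq> z \<longrightarrow> a < u x"
    unfolding eventually_at_topological by blast
  then have "U \<inter> {x\<in>D. u x \<le> a} = {}"
    using \<open>\<not> u z \<le> a\<close> by force
  then show False
    using assms(3) U(1,2) open_Int_closure_eq_empty by blast
qed

lemma lsc_on_compact_attains_min:
  fixes u :: "'a::topological_space \<Rightarrow> real"
  assumes "compact S" "S \<noteq> {}" "lsc_on S u"
  shows "\<exists>x0\<in>S. \<forall>x\<in>S. u x0 \<le> u x"
proof (rule ccontr)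
  assume "\<not> ?thesis"
  then obtain next_pt where next_pt: "\<And>x. x \<in> S \<Longrightarrow> next_pt x \<in> S \<and> u (next_pt x) < u x"
    by (metis not_le)
  have "\<exists>U. open U \<and> x \<in> U \<and> (\<forall>z\<in>U \<inter> S. u (next_pt x) < u z)" if "x \<in> S" for x
  proof -
    have "eventually (\<lambda>z. u (next_pt x) < u z) (at x within S)"
      using assms(3) next_pt that unfolding lsc_on_def by blast
    then obtain U where "open U" "x \<in> U" "\<forall>z\<in>U. z \<in> S \<longrightarrow> z \<noteq> x \<longrightarrow> u (next_pt x) < u z"
      unfolding eventually_at_topological by blast
    then show ?thesis
      using next_pt[OF that] by blast
  qed
  then obtain U where U: "\<And>x. x \<in> S \<Longrightarrow> open (U x) \<and> x \<in> U x \<and> (\<forall>z\<in>U x \<inter> S. u (next_pt x) < u z)"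
    by metis
  obtain T where T: "T \<subseteq> S" "finite T" "S \<subseteq> (\<Union>x\<in>T. U x)"
    using compactE_image[OF assms(1), of S U] U by blast
  then have "T \<noteq> {}"
    using assms(2) by auto
  then obtain j where j: "j \<in> T" "\<forall>i\<in>T. u (next_pt j) \<le> u (next_pt i)"
    using ex_is_arg_min_if_finite[OF T(2), of "\<lambda>i. u (next_pt i)"]
    unfolding is_arg_min_linorder by auto
  then have "next_pt j \<in> S"
    using T(1) next_pt by blast
  then obtain i where "i \<in> T" "next_pt j \<in> U i"
    using T(3) by blast
  then have "u (next_pt i) < u (next_pt j)"
    using U T(1) \<open>next_pt j \<in> S\<close> by blast
  with j \<open>i \<in> T\<close> show False
    by force
qed

lemma lsc_on_attains_min_if_sublevel_compact:
  assumes "lsc_on D u" "x1 \<in> D" "compact {x\<in>D. u x \<le> u x1}"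
  shows "\<exists>x0\<in>D. \<forall>x\<in>D. u x0 \<le> u x"
proof -
  let ?S = "{x\<in>D. u x \<le> u x1}"
  obtain x0 where "x0 \<in> ?S" "\<forall>x\<in>?S. u x0 \<le> u x"
    using lsc_on_compact_attains_min[OF assms(3) _ lsc_on_subset[OF assms(1)]] assms(2) by blast
  then show ?thesis
    by (metis (mono_tags, lifting) mem_Collect_eq nle_le order_trans)
qed

lemma lsc_on_sublevel_compact:
  fixes G :: "'a::heine_borel \<Rightarrow> real"
  assumes "bounded D" "lsc_on D G"
    and frontier: "\<forall>y\<in>frontier D. eventually (\<lambda>x. a < G x) (at y within D)"
  shows "compact {x\<in>D. G x \<le> a}"
proof -
  let ?S = "{x\<in>D. G x \<le> a}"
  have "z \<in> ?S" if z: "z \<in> closure ?S" for z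
  proof -
    have "z \<in> D"
    proof (rule ccontr)
      assume "z \<notin> D"
      moreover have "z \<in> closure D"
        using z closure_mono[of ?S D] by auto
      ultimately have "z \<in> frontier D"
        using interior_subset[of D] by (auto simp: frontier_def)
      then have "eventually (\<lambda>x. a < G x) (at z within ?S)"
        using frontier filter_leD[OF at_le[of ?S D]] by auto
      then have "\<exists>x\<in>?S. a < G x"
        using ex_if_eventually_at_within_closure[OF z] \<open>z \<notin> D\<close> by blast
      then show False
        by auto
    qed
    then show ?thesis
      using lsc_on_sublevel_closed[OF assms(2)] z by simp
  qed
  then have "closed ?S"
    using closure_subset_eq by blast
  moreover have "bounded ?S"
    using assms(1) by (rule bounded_subset) auto
  ultimately show ?thesis
    by (simp add: compact_eq_bounded_closed)
qed

lemma superharmonic_on_imp_open: "superharmonic_on D k \<Longrightarrow> open D"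
  by (simp add: superharmonic_on_def)

lemma superharmonic_on_imp_lsc_on: "superharmonic_on D k \<Longrightarrow> lsc_on D k"
  by (simp add: superharmonic_on_def)

lemma superharmonic_on_cmult:
  assumes k: "superharmonic_on D k" and e: "0 < e"
  shows "superharmonic_on D (\<lambda>x. e * k x)"
proof -
  have "lsc_on D (\<lambda>x. e * k x)"
    unfolding lsc_on_def
  proof (intro ballI allI impI)
    fix x t assume "x \<in> D" "t < e * k x"
    then have "t / e < k x"
      using e by (simp add: pos_divide_less_eq mult.commute)
    then have "eventually (\<lambda>y. t / e < k y) (at x within D)"
      using k \<open>x \<in> D\<close> unfolding superharmonic_on_def lsc_on_def by blast
    then show "eventually (\<lambda>y. t < e * k y) (at x within D)"
      by eventually_elim (use e in \<open>simp add: pos_divide_less_eq mult.commute\<close>)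
  qed
  moreover have "\<forall>y\<in>ball c r. v y \<le> e * k y"
    if "0 < r" "cball c r \<subseteq> D" "continuous_on (cball c r) v" "harmonic_on (ball c r) v"
      "\<forall>y\<in>sphere c r. v y \<le> e * k y" for c r v
  proof -
    have "harmonic_on (ball c r) (\<lambda>y. v y / e)"
      using harmonic_on_lincomb[OF that(4) that(4), of "1 / e" 0] by simp
    moreover have "continuous_on (cball c r) (\<lambda>y. v y / e)"
      using that(3) e by (intro continuous_intros) auto
    moreover have "\<forall>y\<in>sphere c r. v y / e \<le> k y"
      using that(5) e by (simp add: pos_divide_le_eq mult.commute)
    ultimately have "\<forall>y\<in>ball c r. v y / e \<le> k y"
      using k that(1,2) unfolding superharmonic_on_def by blast
    then show ?thesis
      using e by (simp add: pos_divide_le_eq mult.commute)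
  qed
  ultimately show ?thesis
    using superharmonic_on_imp_open[OF k] unfolding superharmonic_on_def by (intro conjI allI impI) auto
qed

lemma superharmonic_on_diff_harmonic:
  assumes k: "superharmonic_on D k" and w: "harmonic_on D w"
  shows "superharmonic_on D (\<lambda>x. k x - w x)"
proof -
  have "lsc_on D (\<lambda>x. k x - w x)"
    by (intro lsc_on_diff_continuous superharmonic_on_imp_lsc_on[OF k]
        harmonic_on_imp_continuous_on[OF w])
  moreover have "\<forall>y\<in>ball c r. v y \<le> k y - w y"
    if "0 < r" "cball c r \<subseteq> D" "continuous_on (cball c r) v" "harmonic_on (ball c r) v"
      "\<forall>y\<in>sphere c r. v y \<le> k y - w y" for c r v
  proof -
    have "harmonic_on (ball c r) w"
      using w that(2) ball_subset_cball by (blast intro: harmonic_on_subset)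
    then have "harmonic_on (ball c r) (\<lambda>y. v y + w y)"
      using harmonic_on_lincomb[OF that(4), of w 1 1] by simp
    moreover have "continuous_on (cball c r) (\<lambda>y. v y + w y)"
      using that(2,3) harmonic_on_imp_continuous_on[OF w]
      by (blast intro: continuous_on_add continuous_on_subset)
    moreover have "\<forall>y\<in>sphere c r. v y + w y \<le> k y"
      using that(5) by auto
    ultimately have "\<forall>y\<in>ball c r. v y + w y \<le> k y"
      using k that(1,2) unfolding superharmonic_on_def by blast
    then show ?thesis
      by auto
  qed
  ultimately show ?thesis
    using superharmonic_on_imp_open[OF k] unfolding superharmonic_on_def by (intro conjI allI impI) auto
qed

lemma controlled_conv_uminus:
  assumes "controlled_conv D f h k"
  shows "controlled_conv D (\<lambda>y. - f y) (\<lambda>x. - h x) k"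
  unfolding controlled_conv_def
proof (intro allI impI conjI)
  fix A y assume Ay: "A \<subseteq> D \<and> y \<in> frontier D \<and> y \<in> closure A"
  note cc = assms[unfolded controlled_conv_def, rule_format, OF Ay]
  assume "Limsup (at y within A) (\<lambda>x. ereal (k x)) < \<infinity>"
  then show "- f y \<noteq> \<infinity>" "- f y \<noteq> - \<infinity>"
    and "((\<lambda>x. - h x) \<longlongrightarrow> real_of_ereal (- f y)) (at y within A)"
    using cc by (auto simp: ereal_uminus_eq_reorder intro: tendsto_minus)
next
  fix A y assume Ay: "A \<subseteq> D \<and> y \<in> frontier D \<and> y \<in> closure A"
  note cc = assms[unfolded controlled_conv_def, rule_format, OF Ay]
  assume "filterlim k at_top (at y within A)"
  then have "((\<lambda>x. - (h x / (1 + k x))) \<longlongrightarrow> - 0) (at y within A)"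
    using cc by (intro tendsto_minus) blast
  then show "((\<lambda>x. - h x / (1 + k x)) \<longlongrightarrow> 0) (at y within A)"
    by simp
qed

lemma controlled_conv_zero: "controlled_conv D (\<lambda>_. 0) (\<lambda>_. 0) k"
  by (simp add: controlled_conv_def)

lemma eventually_less_if_quotient_tendsto_0:
  fixes h k :: "'a \<Rightarrow> real"
  assumes "filterlim k at_top F" "((\<lambda>x. h x / (1 + k x)) \<longlongrightarrow> 0) F" "0 < e"
  shows "eventually (\<lambda>x. h x - e * k x < L + e) F"
proof -
  have "eventually (\<lambda>x. h x / (1 + k x) < e / 2) F"
    using assms(2,3) by (intro order_tendstoD(2)) auto
  moreover have "eventually (\<lambda>x. max 0 (2 * \<bar>L\<bar> / e) \<le> k x) F"
    using assms(1) unfolding filterlim_at_top by blast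
  ultimately show ?thesis
  proof eventually_elim
    case (elim x)
    then have "0 < 1 + k x" and "2 * \<bar>L\<bar> / e \<le> k x"
      by auto
    then have "h x < e / 2 * (1 + k x)" and "\<bar>L\<bar> \<le> e / 2 * k x"
      using elim(1) assms(3) by (simp_all add: divide_less_eq divide_le_eq mult.commute)
    then show ?case
      using abs_ge_minus_self[of L] assms(3) by (simp add: algebra_simps)
  qed
qed

lemma controlled_conv_eventually_less:
  fixes h k :: "'a::euclidean_space \<Rightarrow> real"
  assumes cc: "controlled_conv D f h k" and "open D" and y: "y \<in> frontier D"
    and k_nonneg: "\<forall>x\<in>D. 0 \<le> k x" and e: "0 < e"
  shows "eventually (\<lambda>x. h x - e * k x < real_of_ereal (f y) + e) (at y within D)"
proof -
  define L where "L = real_of_ereal (f y)"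
  define A where "A = {x\<in>D. \<not> h x - e * k x < L + e}"
  have "y \<notin> D"
    using y \<open>open D\<close> by (simp add: frontier_def interior_open)
  have not_eventually: "\<not> eventually (\<lambda>x. h x - e * k x < L + e) (at y within C)"
    if "C \<subseteq> A" "y \<in> closure C" for C
    using ex_if_eventually_at_within_closure[OF that(2)] that(1) \<open>y \<notin> D\<close> by (auto simp: A_def)
  have cc_A: "(Limsup (at y within C) (\<lambda>x. ereal (k x)) < \<infinity> \<longrightarrow> (h \<longlongrightarrow> L) (at y within C))
      \<and> (filterlim k at_top (at y within C) \<longrightarrow> ((\<lambda>x. h x / (1 + k x)) \<longlongrightarrow> 0) (at y within C))"
    if "C \<subseteq> A" "y \<in> closure C" for C
    using cc y that unfolding controlled_conv_def L_def A_def by blast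
  have "y \<notin> closure A"
  proof
    assume yA: "y \<in> closure A"
    from filterlim_at_top_or_closure_sublevel[of k y A] show False
    proof
      assume "filterlim k at_top (at y within A)"
      then have "eventually (\<lambda>x. h x - e * k x < L + e) (at y within A)"
        using cc_A[OF order_refl yA] e by (blast intro: eventually_less_if_quotient_tendsto_0)
      then show False
        using not_eventually[OF order_refl yA] by blast
    next
      assume "\<exists>n::nat. y \<in> closure {x\<in>A. k x \<le> real n}"
      then obtain n :: nat where yC: "y \<in> closure {x\<in>A. k x \<le> real n}"
        by blast
      let ?C = "{x\<in>A. k x \<le> real n}"
      have "Limsup (at y within ?C) (\<lambda>x. ereal (k x)) \<le> ereal (real n)"
        by (intro Limsup_bounded) (simp add: eventually_at_filter)
      then have "Limsup (at y within ?C) (\<lambda>x. ereal (k x)) < \<infinity>"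
        by (rule order_le_less_trans) simp
      then have "(h \<longlongrightarrow> L) (at y within ?C)"
        using cc_A[of ?C] yC by blast
      then have "eventually (\<lambda>x. h x < L + e) (at y within ?C)"
        using e by (intro order_tendstoD(2)) auto
      moreover have "eventually (\<lambda>x. x \<in> ?C) (at y within ?C)"
        by (simp add: eventually_at_filter)
      ultimately have "eventually (\<lambda>x. h x - e * k x < L + e) (at y within ?C)"
      proof eventually_elim
        case (elim x)
        then have "0 \<le> e * k x"
          using k_nonneg e by (simp add: A_def)
        with elim(1) show ?case
          by linarith
      qed
      then show False
        using not_eventually[of ?C] yC by blast
    qed
  qed
  then show ?thesis
    using eventually_at_within_if_notin_closure[where P = "\<lambda>x. h x - e * k x < L + e"]
    unfolding A_def L_def by blast
qed

lemma superharmonic_minus_paraboloid_no_min: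
  fixes u :: "'a::euclidean_space \<Rightarrow> real"
  assumes u: "superharmonic_on D u" and \<eta>: "0 < \<eta>" and x0: "x0 \<in> D"
  shows "\<exists>x\<in>D. u x - \<eta> * (norm x)\<^sup>2 < u x0 - \<eta> * (norm x0)\<^sup>2"
proof (rule ccontr)
  define M where "M = u x0 - \<eta> * (norm x0)\<^sup>2"
  assume "\<not> ?thesis"
  then have above: "M \<le> u x - \<eta> * (norm x)\<^sup>2" if "x \<in> D" for x
    using that by (auto simp: M_def not_less)
  obtain r where r: "0 < r" "cball x0 r \<subseteq> D"
    using open_contains_cball superharmonic_on_imp_open[OF u] x0 by blast
  \<comment> \<open>W agrees with M + \<eta> |x|^2 on the sphere, where u lies above it, but W x0 = u x0 + \<eta> r^2.\<close>
  define W where "W x = ((2 * \<eta>) *\<^sub>R x0) \<bullet> x + (\<eta> * (r\<^sup>2 - (norm x0)\<^sup>2) + M)" for x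
  have "harmonic_on (ball x0 r) W"
    unfolding W_def by (rule harmonic_on_affine) simp
  moreover have "continuous_on (cball x0 r) W"
    unfolding W_def by (intro continuous_intros)
  moreover have "\<forall>y\<in>sphere x0 r. W y \<le> u y"
  proof
    fix y assume y: "y \<in> sphere x0 r"
    have "r\<^sup>2 = (norm (x0 - y))\<^sup>2"
      using y by (simp add: dist_norm)
    also have "\<dots> = (norm y)\<^sup>2 - 2 * (x0 \<bullet> y) + (norm x0)\<^sup>2"
      by (simp add: power2_norm_eq_inner inner_diff_left inner_diff_right inner_commute)
    finally have "(norm y)\<^sup>2 = r\<^sup>2 + 2 * (x0 \<bullet> y) - (norm x0)\<^sup>2"
      by simp
    have "W y = \<eta> * (r\<^sup>2 + 2 * (x0 \<bullet> y) - (norm x0)\<^sup>2) + M"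
      by (simp add: W_def algebra_simps)
    also have "\<dots> = \<eta> * (norm y)\<^sup>2 + M"
      using \<open>(norm y)\<^sup>2 = r\<^sup>2 + 2 * (x0 \<bullet> y) - (norm x0)\<^sup>2\<close> by simp
    also have "\<dots> \<le> u y"
      using above[of y] y r(2) by auto
    finally show "W y \<le> u y" .
  qed
  ultimately have "\<forall>y\<in>ball x0 r. W y \<le> u y"
    using u r unfolding superharmonic_on_def by blast
  then have "W x0 \<le> u x0"
    using r(1) by simp
  moreover have "W x0 = u x0 + \<eta> * r\<^sup>2"
    by (simp add: W_def M_def power2_norm_eq_inner algebra_simps)
  moreover have "0 < \<eta> * r\<^sup>2"
    using \<eta> r(1) by simp
  ultimately show False
    by linarith
qed

lemma superharmonic_minimum_principle:
  fixes u :: "'a::euclidean_space \<Rightarrow> real"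
  assumes "bounded D" and u: "superharmonic_on D u"
    and frontier: "\<forall>y\<in>frontier D. eventually (\<lambda>x. c < u x) (at y within D)"
  shows "\<forall>x\<in>D. c \<le> u x"
proof (rule ccontr)
  assume "\<not> ?thesis"
  then obtain x1 where x1: "x1 \<in> D" "u x1 < c"
    by (auto simp: not_le)
  obtain R where R: "\<forall>x\<in>D. norm x \<le> R"
    using \<open>bounded D\<close> bounded_iff by blast
  define \<eta> where "\<eta> = (c - u x1) / (2 * (R\<^sup>2 + 1))"
  have R2: "0 < 2 * (R\<^sup>2 + 1)"
    by (simp add: add_nonneg_pos)
  then have "0 < \<eta>"
    using x1(2) by (simp add: \<eta>_def)
  have "R\<^sup>2 < 2 * (R\<^sup>2 + 1)"
    by (simp add: algebra_simps add_pos_nonneg)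
  then have "\<eta> * R\<^sup>2 < \<eta> * (2 * (R\<^sup>2 + 1))"
    using \<open>0 < \<eta>\<close> by simp
  also have "\<dots> = c - u x1"
    using R2 by (simp add: \<eta>_def)
  finally have \<eta>R: "\<eta> * R\<^sup>2 < c - u x1" .
  define G where "G x = u x - \<eta> * (norm x)\<^sup>2" for x
  have G_above: "G x1 < G x" if "x \<in> D" "c \<le> u x" for x
  proof -
    have "(norm x)\<^sup>2 \<le> R\<^sup>2"
      using R that(1) by (simp add: power_mono)
    then have "\<eta> * (norm x)\<^sup>2 \<le> \<eta> * R\<^sup>2"
      using \<open>0 < \<eta>\<close> by (simp add: mult_left_mono)
    moreover have "0 \<le> \<eta> * (norm x1)\<^sup>2"
      using \<open>0 < \<eta>\<close> by simp
    ultimately show ?thesis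
      using that(2) \<eta>R unfolding G_def by linarith
  qed
  have lsc: "lsc_on D G"
    unfolding G_def
    by (intro lsc_on_diff_continuous superharmonic_on_imp_lsc_on[OF u] continuous_intros)
  have "\<forall>y\<in>frontier D. eventually (\<lambda>x. G x1 < G x) (at y within D)"
  proof
    fix y assume "y \<in> frontier D"
    then have "eventually (\<lambda>x. c < u x) (at y within D)"
      using frontier by blast
    moreover have "eventually (\<lambda>x. x \<in> D) (at y within D)"
      by (simp add: eventually_at_filter)
    ultimately show "eventually (\<lambda>x. G x1 < G x) (at y within D)"
      by eventually_elim (simp add: G_above)
  qed
  then have "compact {x\<in>D. G x \<le> G x1}"
    by (rule lsc_on_sublevel_compact[OF \<open>bounded D\<close> lsc])
  then obtain x0 where "x0 \<in> D" "\<forall>x\<in>D. G x0 \<le> G x"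
    using lsc_on_attains_min_if_sublevel_compact[OF lsc x1(1)] by blast
  then show False
    using superharmonic_minus_paraboloid_no_min[OF u \<open>0 < \<eta>\<close>] by (force simp: G_def)
qed

lemma continuous_separating_function:
  fixes K S :: "'a::metric_space set" and lo up t :: "'a \<Rightarrow> real"
  assumes "compact K"
    and "\<forall>y\<in>K. \<exists>\<rho>>0. \<forall>x\<in>S. dist x y < \<rho> \<longrightarrow> lo x \<le> t y \<and> t y \<le> up x"
  shows "\<exists>\<phi>. continuous_on K \<phi> \<and>
    (\<forall>z\<in>K. \<exists>\<delta>>0. \<forall>x\<in>S. dist x z < \<delta> \<longrightarrow> lo x \<le> \<phi> z \<and> \<phi> z \<le> up x)"
proof -
  obtain \<rho> where \<rho>: "\<And>y. y \<in> K \<Longrightarrow> 0 < \<rho> y \<and> (\<forall>x\<in>S. dist x y < \<rho> y \<longrightarrow> lo x \<le> t y \<and> t y \<le> up x)"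
    using assms(2) by metis
  obtain Y where Y: "Y \<subseteq> K" "finite Y" "K \<subseteq> (\<Union>y\<in>Y. ball y (\<rho> y / 2))"
    using compactE_image[OF assms(1), of K "\<lambda>y. ball y (\<rho> y / 2)"] \<rho> by force
  \<comment> \<open>A partition of unity subordinate to the half balls: \<phi> z averages the t y over the
    centres y whose half ball contains z, and the whole \<delta>-ball around z lies in their \<rho> y-balls.\<close>
  define \<omega> where "\<omega> y z = max 0 (\<rho> y / 2 - dist z y)" for y z
  define \<phi> where "\<phi> z = (\<Sum>y\<in>Y. \<omega> y z * t y) / (\<Sum>y\<in>Y. \<omega> y z)" for z
  define \<delta> where "\<delta> = Min (insert 1 ((\<lambda>y. \<rho> y / 2) ` Y))"
  have \<omega>_nonneg: "0 \<le> \<omega> y z" for y z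
    by (simp add: \<omega>_def)
  have \<omega>_sum_pos: "0 < (\<Sum>y\<in>Y. \<omega> y z)" if z: "z \<in> K" for z
  proof -
    obtain y where "y \<in> Y" "dist z y < \<rho> y / 2"
      using Y(3) z by (auto simp: dist_commute)
    then show ?thesis
      using Y(2) \<omega>_nonneg by (intro sum_pos2[of _ y]) (auto simp: \<omega>_def)
  qed
  have "continuous_on K \<phi>"
    unfolding \<phi>_def \<omega>_def
    using \<omega>_sum_pos[unfolded \<omega>_def] by (intro continuous_intros) force
  moreover have "0 < \<delta>"
    using Y(1,2) \<rho> by (auto simp: \<delta>_def)
  moreover have "lo x \<le> \<phi> z \<and> \<phi> z \<le> up x" if "z \<in> K" "x \<in> S" "dist x z < \<delta>" for z x
  proof -
    have bounds: "\<omega> y z * lo x \<le> \<omega> y z * t y \<and> \<omega> y z * t y \<le> \<omega> y z * up x" if "y \<in> Y" for y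
    proof (cases "dist z y < \<rho> y / 2")
      case True
      have "\<delta> \<le> \<rho> y / 2"
        unfolding \<delta>_def using Y(2) \<open>y \<in> Y\<close> by (intro Min_le) auto
      then have "dist x y < \<rho> y"
        using True \<open>dist x z < \<delta>\<close> dist_triangle[of x y z] by linarith
      then have "lo x \<le> t y \<and> t y \<le> up x"
        using \<rho> Y(1) \<open>y \<in> Y\<close> \<open>x \<in> S\<close> by blast
      then show ?thesis
        using \<omega>_nonneg[of y z] by (simp add: mult_left_mono)
    qed (simp add: \<omega>_def)
    have "(\<Sum>y\<in>Y. \<omega> y z) * lo x \<le> (\<Sum>y\<in>Y. \<omega> y z * t y)"
      "(\<Sum>y\<in>Y. \<omega> y z * t y) \<le> (\<Sum>y\<in>Y. \<omega> y z) * up x"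
      unfolding sum_distrib_right using bounds by (auto intro: sum_mono)
    then show ?thesis
      using \<omega>_sum_pos[OF \<open>z \<in> K\<close>]
      by (simp add: \<phi>_def pos_le_divide_eq pos_divide_le_eq mult.commute)
  qed
  ultimately show ?thesis
    by blast
qed

lemma controlled_conv_frontier_sandwich:
  fixes D :: "'a::euclidean_space set" and h1 h2 k1 k2 :: "'a \<Rightarrow> real"
  assumes "open D" and cc1: "controlled_conv D f h1 k1" and cc2: "controlled_conv D f h2 k2"
    and k1: "\<forall>x\<in>D. 0 \<le> k1 x" and k2: "\<forall>x\<in>D. 0 \<le> k2 x" and "0 < e"
  shows "\<forall>y\<in>frontier D. \<exists>\<rho>>0. \<forall>x\<in>D. dist x y < \<rho> \<longrightarrow>
    h1 x - e * k1 x - e \<le> real_of_ereal (f y) \<and> real_of_ereal (f y) \<le> h2 x + e * k2 x + e"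
proof
  fix y assume y: "y \<in> frontier D"
  have "y \<notin> D"
    using y \<open>open D\<close> by (simp add: frontier_def interior_open)
  have "eventually (\<lambda>x. h1 x - e * k1 x < real_of_ereal (f y) + e) (at y within D)"
    using controlled_conv_eventually_less[OF cc1 \<open>open D\<close> y k1 \<open>0 < e\<close>] .
  moreover have "eventually (\<lambda>x. - h2 x - e * k2 x < - real_of_ereal (f y) + e) (at y within D)"
    using controlled_conv_eventually_less[OF controlled_conv_uminus[OF cc2] \<open>open D\<close> y k2 \<open>0 < e\<close>]
    by simp
  ultimately have "eventually (\<lambda>x. h1 x - e * k1 x - e \<le> real_of_ereal (f y)
      \<and> real_of_ereal (f y) \<le> h2 x + e * k2 x + e) (at y within D)"
    by eventually_elim auto
  then obtain \<rho> where "0 < \<rho>" and \<rho>: "\<forall>x\<in>D. x \<noteq> y \<and> dist x y < \<rho> \<longrightarrow>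
      h1 x - e * k1 x - e \<le> real_of_ereal (f y) \<and> real_of_ereal (f y) \<le> h2 x + e * k2 x + e"
    unfolding eventually_at by blast
  then show "\<exists>\<rho>>0. \<forall>x\<in>D. dist x y < \<rho> \<longrightarrow>
      h1 x - e * k1 x - e \<le> real_of_ereal (f y) \<and> real_of_ereal (f y) \<le> h2 x + e * k2 x + e"
    using \<open>y \<notin> D\<close> by (intro exI[of _ \<rho>] conjI ballI impI) auto
qed

lemma harmonic_diff_le_if_frontier_sandwich:
  fixes D :: "'a::euclidean_space set" and h1 h2 k1 k2 :: "'a \<Rightarrow> real"
  assumes D: "regular_domain D" and h1: "harmonic_on D h1" and h2: "harmonic_on D h2"
    and k1: "superharmonic_on D k1" and k2: "superharmonic_on D k2" and "0 < e"
    and "continuous_on (frontier D) \<phi>"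
    and sandwich: "\<forall>z\<in>frontier D. \<exists>\<delta>>0. \<forall>x\<in>D. dist x z < \<delta> \<longrightarrow>
      h1 x - e * k1 x - e \<le> \<phi> z \<and> \<phi> z \<le> h2 x + e * k2 x + e"
  shows "\<forall>x\<in>D. h1 x - h2 x \<le> e * (k1 x + k2 x + 4)"
proof -
  obtain H where H: "harmonic_on D H" "\<forall>z\<in>frontier D. (H \<longlongrightarrow> \<phi> z) (at z within D)"
    using D \<open>continuous_on (frontier D) \<phi>\<close> unfolding regular_domain_def by blast
  have "eventually (\<lambda>x. - 2 * e < e * k1 x - (h1 x - H x)
      \<and> - 2 * e < e * k2 x - (H x - h2 x)) (at z within D)" if z: "z \<in> frontier D" for z
  proof -
    obtain \<delta> where "0 < \<delta>" and \<delta>: "\<forall>x\<in>D. dist x z < \<delta> \<longrightarrow>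
        h1 x - e * k1 x - e \<le> \<phi> z \<and> \<phi> z \<le> h2 x + e * k2 x + e"
      using sandwich z by blast
    then have "eventually (\<lambda>x. h1 x - e * k1 x - e \<le> \<phi> z \<and> \<phi> z \<le> h2 x + e * k2 x + e) (at z within D)"
      unfolding eventually_at by (intro exI[of _ \<delta>]) auto
    moreover have "eventually (\<lambda>x. dist (H x) (\<phi> z) < e) (at z within D)"
      using H(2) z \<open>0 < e\<close> tendstoD by blast
    ultimately show ?thesis
      by eventually_elim (auto simp: dist_real_def)
  qed
  then have ev1: "\<forall>z\<in>frontier D. eventually (\<lambda>x. - 2 * e < e * k1 x - (h1 x - H x)) (at z within D)"
    and ev2: "\<forall>z\<in>frontier D. eventually (\<lambda>x. - 2 * e < e * k2 x - (H x - h2 x)) (at z within D)"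
    by (simp_all add: eventually_conj_iff)
  have "bounded D"
    using D by (simp add: regular_domain_def)
  have "\<forall>x\<in>D. - 2 * e \<le> e * k1 x - (h1 x - H x)"
    using superharmonic_minimum_principle[OF \<open>bounded D\<close> superharmonic_on_diff_harmonic[OF
          superharmonic_on_cmult[OF k1 \<open>0 < e\<close>] harmonic_on_diff[OF h1 H(1)]] ev1] .
  moreover have "\<forall>x\<in>D. - 2 * e \<le> e * k2 x - (H x - h2 x)"
    using superharmonic_minimum_principle[OF \<open>bounded D\<close> superharmonic_on_diff_harmonic[OF
          superharmonic_on_cmult[OF k2 \<open>0 < e\<close>] harmonic_on_diff[OF H(1) h2]] ev2] .
  ultimately show ?thesis
    by (fastforce simp: algebra_simps)
qed

lemma controlled_conv_le:
  fixes D :: "'a::euclidean_space set" and h1 h2 k1 k2 :: "'a \<Rightarrow> real"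
  assumes D: "regular_domain D"
    and h1: "harmonic_on D h1" and h2: "harmonic_on D h2"
    and k1: "superharmonic_on D k1" "\<forall>x\<in>D. 0 \<le> k1 x"
    and k2: "superharmonic_on D k2" "\<forall>x\<in>D. 0 \<le> k2 x"
    and cc1: "controlled_conv D f h1 k1" and cc2: "controlled_conv D f h2 k2"
  shows "\<forall>x\<in>D. h1 x \<le> h2 x"
proof -
  have "open D" "bounded D"
    using D by (simp_all add: regular_domain_def)
  have bound: "\<forall>x\<in>D. h1 x - h2 x \<le> e * (k1 x + k2 x + 4)" if e: "0 < e" for e
  proof -
    obtain \<phi> where "continuous_on (frontier D) \<phi>" and "\<forall>z\<in>frontier D. \<exists>\<delta>>0. \<forall>x\<in>D.
        dist x z < \<delta> \<longrightarrow> h1 x - e * k1 x - e \<le> \<phi> z \<and> \<phi> z \<le> h2 x + e * k2 x + e"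
      using continuous_separating_function[OF compact_frontier_bounded[OF \<open>bounded D\<close>]
          controlled_conv_frontier_sandwich[OF \<open>open D\<close> cc1 cc2 k1(2) k2(2) e]]
      by blast
    then show ?thesis
      by (rule harmonic_diff_le_if_frontier_sandwich[OF D h1 h2 k1(1) k2(1) e])
  qed
  show ?thesis
  proof
    fix x assume "x \<in> D"
    then have K: "0 < k1 x + k2 x + 4"
      using k1(2) k2(2) by (simp add: add_nonneg_pos)
    have "h1 x - h2 x \<le> 0 + e" if "0 < e" for e
      using bound[of "e / (k1 x + k2 x + 4)"] \<open>x \<in> D\<close> K that by fastforce
    then have "h1 x - h2 x \<le> 0"
      by (rule field_le_epsilon)
    then show "h1 x \<le> h2 x"
      by simp
  qed
qed

lemma controlled_conv_unique:
  fixes D :: "'a::euclidean_space set" and h1 h2 k1 k2 :: "'a \<Rightarrow> real"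
  assumes "regular_domain D"
    and "harmonic_on D h1" and "harmonic_on D h2"
    and "superharmonic_on D k1" "\<forall>x\<in>D. 0 \<le> k1 x"
    and "superharmonic_on D k2" "\<forall>x\<in>D. 0 \<le> k2 x"
    and "controlled_conv D f h1 k1" and "controlled_conv D f h2 k2"
  shows "\<forall>x\<in>D. h1 x = h2 x"
  using controlled_conv_le[OF assms] controlled_conv_le[OF assms(1,3,2,6,7,4,5,9,8)]
  by (simp add: order_antisym)

theorem corollary2p4:
  fixes D :: "('a::euclidean_space) set" and f :: "'a \<Rightarrow> ereal"
    and h1 h2 k1 k2 :: "'a \<Rightarrow> real"
  assumes "DIM('a) \<ge> 3"
    and "regular_domain D"
    and "harmonic_on D h1" and "harmonic_on D h2"
    and "superharmonic_on D k1" and "\<forall>x\<in>D. 0 \<le> k1 x"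
    and "superharmonic_on D k2" and "\<forall>x\<in>D. 0 \<le> k2 x"
    and "controlled_conv D f h1 k1" and "controlled_conv D f h2 k2"
  shows "(\<forall>x\<in>D. h1 x = h2 x) \<and>
    (\<forall>u k. harmonic_on D u \<and> superharmonic_on D k \<and> (\<forall>x\<in>D. 0 \<le> k x)
        \<and> controlled_conv D (\<lambda>_. 0) u k \<longrightarrow> (\<forall>x\<in>D. u x = 0))"
proof (intro conjI allI impI)
  show "\<forall>x\<in>D. h1 x = h2 x"
    using controlled_conv_unique[OF assms(2-10)] .
  fix u k
  assume "harmonic_on D u \<and> superharmonic_on D k \<and> (\<forall>x\<in>D. 0 \<le> k x) \<and> controlled_conv D (\<lambda>_. 0) u k"
  then have u: "harmonic_on D u" and k: "superharmonic_on D k" "\<forall>x\<in>D. 0 \<le> k x"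
    and cc: "controlled_conv D (\<lambda>_. 0) u k"
    by auto
  have "harmonic_on D (\<lambda>_. 0)"
    using harmonic_on_affine[of D 0 0] assms(2) by (simp add: regular_domain_def)
  then show "\<forall>x\<in>D. u x = 0"
    using controlled_conv_unique[OF assms(2) u _ k k cc controlled_conv_zero] by simp
qed

end
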